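(* Each of $d_{GH}$, $d^{us}_{GH}$, $d^{ls}_{GH}$, $d^{rc}_{GH}$ is a generalized pseudometric on nonempty metric spaces: for $d^{gen}_{GH}$ any one of them and any nonempty metric spaces $X,Y,Z$, we have $d^{gen}_{GH}(X,Y)\in[0,\infty]$, $d^{gen}_{GH}(X,X)=0$, $d^{gen}_{GH}(X,Y)=d^{gen}_{GH}(Y,X)$, and $d^{gen}_{GH}(X,Z)\le d^{gen}_{GH}(X,Y)+d^{gen}_{GH}(Y,Z)$.
   Context: For a metric space, $|xy|$ denotes distance. A set-valued map $f:X\rightrightarrows Y$ assigns to each $x\in X$ a nonempty $f(x)\subseteq Y$ and is identified with its graph. A correspondence between $X$ and $Y$ is a subset $R\subseteq X\times Y$ whose projections to $X$ and to $Y$ are both surjective, regarded as the set-valued map $x\mapsto R(x)=\{y:(x,y)\in R\}$; $R^{-1}=\{(y,x):(x,y)\in R\}$; $\mathcal R(X,Y)$ is the set of all correspondences. The distortion of a nonempty $\sigma\subseteq X\times Y$ is $\operatorname{dis}\sigma=\sup\{||xx'|-|yy'||:(x,y),(x',y')\in\sigma\}\in[0,\infty]$. A set-valued map $f$ between topological spaces is upper semicontinuous if for every $x$ and every open $U\supseteq f(x)$ there is a neighborhood $V$ of $x$ with $f(x')\subseteq U$ for all $x'\in V$; lower semicontinuous if for every $x$ and every open $U$ with $f(x)\cap U\ne\emptyset$ there is a neighborhood $V$ of $x$ with $f(x')\cap U\neq\emptyset$ for all $x'\in V$; continuous if both. $\mathcal R_{us}(X,Y)$ (resp. $\mathcal R_{ls}(X,Y)$,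 $\mathcal R_{rc}(X,Y)$) is the set of $R\in\mathcal R(X,Y)$ such that both $R$ and $R^{-1}$ are upper semicontinuous (resp. lower semicontinuous, continuous). Then $d_{GH}(X,Y)=\frac12\inf\{\operatorname{dis}R:R\in\mathcal R(X,Y)\}$, and $d^{us}_{GH},d^{ls}_{GH},d^{rc}_{GH}$ are defined by the same formula with $\mathcal R$ replaced by $\mathcal R_{us},\mathcal R_{ls},\mathcal R_{rc}$ respectively. *)

theory Defs
  imports "HOL-Analysis.Analysis"
begin

definition is_correspondence :: "'a metric \<Rightarrow> 'b metric \<Rightarrow> ('a \<times> 'b) set \<Rightarrow> bool" where
  "is_correspondence X Y R \<longleftrightarrow>
     R \<subseteq> mspace X \<times> mspace Y \<and> fst ` R = mspace X \<and> snd ` R = mspace Y"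

definition upper_semicont :: "'a topology \<Rightarrow> 'b topology \<Rightarrow> ('a \<times> 'b) set \<Rightarrow> bool" where
  "upper_semicont S T R \<longleftrightarrow>
     (\<forall>x\<in>topspace S. \<forall>U. openin T U \<and> R `` {x} \<subseteq> U \<longrightarrow>
        (\<exists>V. openin S V \<and> x \<in> V \<and> (\<forall>x'\<in>V. R `` {x'} \<subseteq> U)))"

definition lower_semicont :: "'a topology \<Rightarrow> 'b topology \<Rightarrow> ('a \<times> 'b) set \<Rightarrow> bool" where
  "lower_semicont S T R \<longleftrightarrow>
     (\<forall>x\<in>topspace S. \<forall>U. openin T U \<and> R `` {x} \<inter> U \<noteq> {} \<longrightarrow>
        (\<exists>V. openin S V \<and> x \<in> V \<and> (\<forall>x'\<in>V. R `` {x'} \<inter> U \<noteq> {})))"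

definition distortion :: "'a metric \<Rightarrow> 'b metric \<Rightarrow> ('a \<times> 'b) set \<Rightarrow> ereal" where
  "distortion X Y \<sigma> =
     Sup {ereal \<bar>mdist X x x' - mdist Y y y'\<bar> | x y x' y'. (x, y) \<in> \<sigma> \<and> (x', y') \<in> \<sigma>}"

datatype GH_kind = GH_all | GH_us | GH_ls | GH_rc

definition admissible :: "GH_kind \<Rightarrow> 'a metric \<Rightarrow> 'b metric \<Rightarrow> ('a \<times> 'b) set \<Rightarrow> bool" where
  "admissible k X Y R \<longleftrightarrow> is_correspondence X Y R \<and>
     (case k of
        GH_all \<Rightarrow> True
      | GH_us \<Rightarrow> upper_semicont (mtopology_of X) (mtopology_of Y) R
                 \<and> upper_semicont (mtopology_of Y) (mtopology_of X) (converse R)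
      | GH_ls \<Rightarrow> lower_semicont (mtopology_of X) (mtopology_of Y) R
                 \<and> lower_semicont (mtopology_of Y) (mtopology_of X) (converse R)
      | GH_rc \<Rightarrow> upper_semicont (mtopology_of X) (mtopology_of Y) R
                 \<and> lower_semicont (mtopology_of X) (mtopology_of Y) R
                 \<and> upper_semicont (mtopology_of Y) (mtopology_of X) (converse R)
                 \<and> lower_semicont (mtopology_of Y) (mtopology_of X) (converse R))"

definition dGH :: "GH_kind \<Rightarrow> 'a metric \<Rightarrow> 'b metric \<Rightarrow> ereal" where
  "dGH k X Y = Inf {distortion X Y R | R. admissible k X Y R} / 2"

end

theory Submission
  imports Defs
begin

(* Correspondences of each of the four kinds contain the identity and are closed under
   converse and composition: upper (lower) semicontinuity of R says exactly that the sets
   {x. R(x) \<subseteq> U} (resp. {x. R(x) \<inter> U \<noteq> {}}) are open for open U, and these sets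
   compose.  Distortion is invariant under converse and subadditive under composition,
   by the triangle inequality in the reals, so taking infima gives symmetry and the
   triangle inequality; the identity has distortion 0. *)

lemma ereal_le_Inf_add:
  fixes A B :: "ereal set"
  assumes A: "\<And>a. a \<in> A \<Longrightarrow> 0 \<le> a" and B: "\<And>b. b \<in> B \<Longrightarrow> 0 \<le> b"
    and le: "\<And>a b. a \<in> A \<Longrightarrow> b \<in> B \<Longrightarrow> c \<le> a + b"
  shows "c \<le> Inf A + Inf B"
proof (cases "A = {} \<or> B = {}")
  case True
  have "0 \<le> Inf A" "0 \<le> Inf B"
    using A B by (simp_all add: le_Inf_iff)
  then show ?thesis
    using True by (auto simp: top_ereal_def)
next
  case False
  have "c \<le> a + Inf B" if "a \<in> A" for a
  proof -
    have "c \<le> (INF b\<in>B. a + b)"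
      using le that by (intro INF_greatest) auto
    also have "\<dots> = a + Inf B"
      using False A B that by (subst INF_ereal_add_right) auto
    finally show ?thesis .
  qed
  then have "c \<le> (INF a\<in>A. a + Inf B)"
    by (intro INF_greatest)
  also have "\<dots> = Inf A + Inf B"
    using False A B by (subst INF_ereal_add_left) (auto simp: le_Inf_iff)
  finally show ?thesis .
qed

lemma ereal_add_divide_distrib:
  fixes a b c :: ereal
  shows "0 \<le> a \<Longrightarrow> 0 \<le> b \<Longrightarrow> (a + b) / c = a / c + b / c"
  unfolding divide_ereal_def by (rule ereal_left_distrib)

lemma openin_Collect_iff_pointwise:
  "openin S {x \<in> topspace S. P x} \<longleftrightarrow>
     (\<forall>x\<in>topspace S. P x \<longrightarrow> (\<exists>V. openin S V \<and> x \<in> V \<and> (\<forall>x'\<in>V. P x')))"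
proof -
  have "V \<subseteq> {x \<in> topspace S. P x} \<longleftrightarrow> (\<forall>x'\<in>V. P x')" if "openin S V" for V
    using openin_subset[OF that] by blast
  then show ?thesis
    unfolding openin_subopen[of S "{x \<in> topspace S. P x}"] by (auto cong: conj_cong)
qed

lemma upper_semicont_iff_openin:
  "upper_semicont S T R \<longleftrightarrow>
     (\<forall>U. openin T U \<longrightarrow> openin S {x \<in> topspace S. R `` {x} \<subseteq> U})"
  unfolding upper_semicont_def openin_Collect_iff_pointwise by blast

lemma lower_semicont_iff_openin:
  "lower_semicont S T R \<longleftrightarrow>
     (\<forall>U. openin T U \<longrightarrow> openin S {x \<in> topspace S. R `` {x} \<inter> U \<noteq> {}})"
  unfolding lower_semicont_def openin_Collect_iff_pointwise by blast

lemma upper_semicont_Id_on: "upper_semicont T T (Id_on (topspace T))"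
proof -
  have "{x \<in> topspace T. Id_on (topspace T) `` {x} \<subseteq> U} = U" if "openin T U" for U
    using openin_subset[OF that] by auto
  then show ?thesis
    unfolding upper_semicont_iff_openin by simp
qed

lemma lower_semicont_Id_on: "lower_semicont T T (Id_on (topspace T))"
proof -
  have "{x \<in> topspace T. Id_on (topspace T) `` {x} \<inter> U \<noteq> {}} = U" if "openin T U" for U
    using openin_subset[OF that] by auto
  then show ?thesis
    unfolding lower_semicont_iff_openin by simp
qed

lemma upper_semicont_relcomp:
  assumes "upper_semicont S T R" "upper_semicont T W Q" "R `` topspace S \<subseteq> topspace T"
  shows "upper_semicont S W (R O Q)"
  unfolding upper_semicont_iff_openin
proof (intro allI impI)
  fix U assume "openin W U"
  then have "openin T {y \<in> topspace T. Q `` {y} \<subseteq> U}"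
    using assms(2) by (simp add: upper_semicont_iff_openin)
  then have "openin S {x \<in> topspace S. R `` {x} \<subseteq> {y \<in> topspace T. Q `` {y} \<subseteq> U}}"
    using assms(1) by (simp add: upper_semicont_iff_openin)
  moreover have "{x \<in> topspace S. R `` {x} \<subseteq> {y \<in> topspace T. Q `` {y} \<subseteq> U}}
      = {x \<in> topspace S. (R O Q) `` {x} \<subseteq> U}"
    using assms(3) by blast
  ultimately show "openin S {x \<in> topspace S. (R O Q) `` {x} \<subseteq> U}"
    by simp
qed

lemma lower_semicont_relcomp:
  assumes "lower_semicont S T R" "lower_semicont T W Q" "R `` topspace S \<subseteq> topspace T"
  shows "lower_semicont S W (R O Q)"
  unfolding lower_semicont_iff_openin
proof (intro allI impI)
  fix U assume "openin W U"
  then have "openin T {y \<in> topspace T. Q `` {y} \<inter> U \<noteq> {}}"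
    using assms(2) by (simp add: lower_semicont_iff_openin)
  then have "openin S {x \<in> topspace S. R `` {x} \<inter> {y \<in> topspace T. Q `` {y} \<inter> U \<noteq> {}} \<noteq> {}}"
    using assms(1) by (simp add: lower_semicont_iff_openin)
  moreover have "{x \<in> topspace S. R `` {x} \<inter> {y \<in> topspace T. Q `` {y} \<inter> U \<noteq> {}} \<noteq> {}}
      = {x \<in> topspace S. (R O Q) `` {x} \<inter> U \<noteq> {}}"
    using assms(3) by blast
  ultimately show "openin S {x \<in> topspace S. (R O Q) `` {x} \<inter> U \<noteq> {}}"
    by simp
qed

lemma is_correspondence_converse:
  "is_correspondence X Y R \<Longrightarrow> is_correspondence Y X (converse R)"
  unfolding is_correspondence_def fst_eq_Domain snd_eq_Range by auto

lemma is_correspondence_relcomp: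
  assumes "is_correspondence X Y R" "is_correspondence Y Z Q"
  shows "is_correspondence X Z (R O Q)"
proof -
  have "Domain (R O Q) = Domain R" "Range (R O Q) = Range Q"
    using assms unfolding is_correspondence_def fst_eq_Domain snd_eq_Range by blast+
  then show ?thesis
    using assms unfolding is_correspondence_def fst_eq_Domain snd_eq_Range by blast
qed

lemma is_correspondence_Id_on: "is_correspondence X X (Id_on (mspace X))"
  unfolding is_correspondence_def fst_eq_Domain snd_eq_Range by auto

lemma admissible_converse:
  "admissible k X Y R \<Longrightarrow> admissible k Y X (converse R)"
  unfolding admissible_def using is_correspondence_converse by (cases k) auto

lemma admissible_relcomp:
  assumes R: "admissible k X Y R" and Q: "admissible k Y Z Q"
  shows "admissible k X Z (R O Q)"
proof -
  let ?X = "mtopology_of X" and ?Y = "mtopology_of Y" and ?Z = "mtopology_of Z"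
  have corr: "is_correspondence X Y R" "is_correspondence Y Z Q"
    using R Q by (simp_all add: admissible_def)
  then have "R `` mspace X \<subseteq> mspace Y" "converse Q `` mspace Z \<subseteq> mspace Y"
    unfolding is_correspondence_def by auto
  moreover note upper_semicont_relcomp[of ?X ?Y R ?Z Q] lower_semicont_relcomp[of ?X ?Y R ?Z Q]
    upper_semicont_relcomp[of ?Z ?Y "converse Q" ?X "converse R"]
    lower_semicont_relcomp[of ?Z ?Y "converse Q" ?X "converse R"]
  ultimately show ?thesis
    using R Q is_correspondence_relcomp[OF corr] unfolding admissible_def converse_relcomp
    by (cases k) simp_all
qed

lemma admissible_Id_on: "admissible k X X (Id_on (mspace X))"
  using upper_semicont_Id_on[of "mtopology_of X"] lower_semicont_Id_on[of "mtopology_of X"]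
  by (cases k) (simp_all add: admissible_def is_correspondence_Id_on)

lemma distortion_le_iff:
  "distortion X Y \<sigma> \<le> c \<longleftrightarrow>
     (\<forall>x y x' y'. (x, y) \<in> \<sigma> \<longrightarrow> (x', y') \<in> \<sigma> \<longrightarrow>
        ereal \<bar>mdist X x x' - mdist Y y y'\<bar> \<le> c)"
  unfolding distortion_def Sup_le_iff by blast

lemma le_distortion:
  "(x, y) \<in> \<sigma> \<Longrightarrow> (x', y') \<in> \<sigma> \<Longrightarrow> ereal \<bar>mdist X x x' - mdist Y y y'\<bar> \<le> distortion X Y \<sigma>"
  unfolding distortion_def by (rule Sup_upper) blast

lemma distortion_nonneg:
  assumes "\<sigma> \<noteq> {}"
  shows "0 \<le> distortion X Y \<sigma>"
proof -
  obtain x y where xy: "(x, y) \<in> \<sigma>"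
    using assms by auto
  show ?thesis
    using le_distortion[OF xy xy] by (rule order_trans[rotated]) simp
qed

lemma distortion_converse_le: "distortion Y X (converse \<sigma>) \<le> distortion X Y \<sigma>"
  by (clarsimp simp: distortion_le_iff) (metis abs_minus_commute le_distortion)

lemma distortion_converse: "distortion Y X (converse \<sigma>) = distortion X Y \<sigma>"
  using distortion_converse_le[of Y X \<sigma>] distortion_converse_le[of X Y "converse \<sigma>"]
  by simp

lemma distortion_Id_on: "mspace X \<noteq> {} \<Longrightarrow> distortion X X (Id_on (mspace X)) = 0"
  by (intro antisym distortion_nonneg) (auto simp: distortion_le_iff)

lemma distortion_relcomp_le:
  "distortion X Z (R O Q) \<le> distortion X Y R + distortion Y Z Q"
  unfolding distortion_le_iff
proof (intro allI impI)
  fix x z x' z' assume "(x, z) \<in> R O Q" "(x', z') \<in> R O Q"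
  then obtain y y' where "(x, y) \<in> R" "(y, z) \<in> Q" "(x', y') \<in> R" "(y', z') \<in> Q"
    by blast
  have "ereal \<bar>mdist X x x' - mdist Z z z'\<bar>
      \<le> ereal \<bar>mdist X x x' - mdist Y y y'\<bar> + ereal \<bar>mdist Y y y' - mdist Z z z'\<bar>"
    by simp
  also have "\<dots> \<le> distortion X Y R + distortion Y Z Q"
    by (intro add_mono le_distortion) fact+
  finally show "ereal \<bar>mdist X x x' - mdist Z z z'\<bar> \<le> distortion X Y R + distortion Y Z Q" .
qed

text \<open>Nonemptiness matters: the only correspondence between empty spaces is {}, whose
  distortion is Sup {} = -\<infinity>.\<close>

lemma admissible_distortion_nonneg:
  "admissible k X Y R \<Longrightarrow> mspace X \<noteq> {} \<Longrightarrow> 0 \<le> distortion X Y R"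
  by (intro distortion_nonneg) (auto simp: admissible_def is_correspondence_def)

lemma dGH_le_distortion: "admissible k X Y R \<Longrightarrow> dGH k X Y \<le> distortion X Y R / 2"
  unfolding dGH_def by (intro ereal_divide_right_mono Inf_lower) auto

lemma Inf_admissible_distortion_nonneg:
  "mspace X \<noteq> {} \<Longrightarrow> 0 \<le> Inf {distortion X Y R | R. admissible k X Y R}"
  by (auto intro: Inf_greatest admissible_distortion_nonneg)

lemma dGH_nonneg: "mspace X \<noteq> {} \<Longrightarrow> 0 \<le> dGH k X Y"
  unfolding dGH_def
  using ereal_divide_right_mono[OF Inf_admissible_distortion_nonneg, of X 2] by simp

lemma dGH_self: "mspace X \<noteq> {} \<Longrightarrow> dGH k X X = 0"
  using dGH_le_distortion[OF admissible_Id_on] distortion_Id_on dGH_nonneg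
  by (metis antisym ereal_divide_zero_left)

lemma dGH_le_commute: "dGH k Y X \<le> dGH k X Y"
  unfolding dGH_def
proof (intro ereal_divide_right_mono Inf_greatest)
  fix d assume "d \<in> {distortion X Y R | R. admissible k X Y R}"
  then obtain R where "admissible k X Y R" "d = distortion X Y R"
    by blast
  then have "admissible k Y X (converse R)" "d = distortion Y X (converse R)"
    by (simp_all add: admissible_converse distortion_converse)
  then show "Inf {distortion Y X R | R. admissible k Y X R} \<le> d"
    by (auto intro: Inf_lower)
qed simp

lemma dGH_commute: "dGH k X Y = dGH k Y X"
  by (intro antisym dGH_le_commute)

lemma dGH_triangle:
  assumes "mspace X \<noteq> {}" "mspace Y \<noteq> {}"
  shows "dGH k X Z \<le> dGH k X Y + dGH k Y Z"
proof -
  let ?D = "\<lambda>X Y. Inf {distortion X Y R | R. admissible k X Y R}"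
  have "?D X Z \<le> ?D X Y + ?D Y Z"
  proof (rule ereal_le_Inf_add)
    fix a b
    assume "a \<in> {distortion X Y R | R. admissible k X Y R}" "b \<in> {distortion Y Z Q | Q. admissible k Y Z Q}"
    then obtain R Q where RQ: "admissible k X Y R" "admissible k Y Z Q" and "a = distortion X Y R" "b = distortion Y Z Q"
      by blast
    then have "distortion X Z (R O Q) \<le> a + b"
      using distortion_relcomp_le by simp
    then show "?D X Z \<le> a + b"
      using admissible_relcomp[OF RQ] by (blast intro: Inf_lower2)
  qed (auto simp: assms admissible_distortion_nonneg)
  then have "dGH k X Z \<le> (?D X Y + ?D Y Z) / 2"
    unfolding dGH_def by simp
  also have "\<dots> = dGH k X Y + dGH k Y Z"
    unfolding dGH_def by (intro ereal_add_divide_distrib Inf_admissible_distortion_nonneg assms)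
  finally show ?thesis .
qed

theorem mainTheorem10:
  fixes k :: GH_kind and X :: "'a metric" and Y :: "'b metric" and Z :: "'c metric"
  assumes "mspace X \<noteq> {}" and "mspace Y \<noteq> {}" and "mspace Z \<noteq> {}"
  shows "0 \<le> dGH k X Y \<and> dGH k X X = 0 \<and> dGH k X Y = dGH k Y X
         \<and> dGH k X Z \<le> dGH k X Y + dGH k Y Z"
  using assms by (intro conjI dGH_nonneg dGH_self dGH_commute dGH_triangle)

end
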